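(* Assume the general-case standing hypotheses, let $\sigma\in(0,1)$, $\mu^+=\sigma\mu$, $C_1>0$. Then there exist $\rho>0$, $\bar\mu\in(0,\hat\mu]$ and $C>0$ such that for all $\mu\in(0,\bar\mu]$ and all $(x,\lambda)\in\mathcal B((x^*,\lambda^* ),\delta)$ with $l<x<u$, $\lambda^l,\lambda^u>0$, $\|(x,\lambda)-(x^\mu,\lambda^\mu)\|<\rho$, $\|F_\mu(x,\lambda)\|\le C_1\mu$, the direction $(\Delta x,\Delta\lambda^l,\Delta\lambda^u)$ below is well defined and $$\|(\Delta x,\Delta\lambda^l,\Delta\lambda^u)-(\Delta x^N,\Delta\lambda^{l,N},\Delta\lambda^{u,N})\|\le C\mu^2.$$ Construction (write $H=\nabla^2f(x)$): (i) for $i\in\mathcal A_x$, $\Delta x_i\in\{\Delta x_i^S,\Delta x_i^C\}$ (arbitrary per index). (ii) $\Delta x_{\mathcal I_x}=\Delta x^{ls}_{\mathcal I_x}$ is the solution of the linear system, for $i\in\mathcal I_x$, $$\sum_{j\in\mathcal I_x}H_{ij}\Delta x_j+\Big(\frac{\lambda^l_i}{x_i-l_i}+\frac{\lambda^u_i}{u_i-x_i}\Big)\Delta x_i=-[\nabla f(x)]_i-\sum_{j\in\mathcal A_x}H_{ij}\Delta x_j+\frac{\mu^+}{x_i-l_i}-\frac{\mu^+}{u_i-x_i}.$$ (iii) For $i\in\mathcal I_l$ set $\Delta\lambda^{l,ls}_i=-\lambda^l_i+\frac{\mu^+-\lambda^l_i\Delta x_i}{x_i-l_i}$, and for $i\in\mathcal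 I_u$ set $\Delta\lambda^{u,ls}_i=-\lambda^u_i+\frac{\mu^++\lambda^u_i\Delta x_i}{u_i-x_i}$; take $\Delta\lambda^l_i\in\{\Delta\lambda^{l,ls}_i,\Delta\lambda^{l,C}_i\}$ ($i\in\mathcal I_l$) and $\Delta\lambda^u_i\in\{\Delta\lambda^{u,ls}_i,\Delta\lambda^{u,C}_i\}$ ($i\in\mathcal I_u$). (iv) For $i\in\mathcal A_x$ let $r_i=[\nabla f(x)]_i-\lambda^l_i+\lambda^u_i+\sum_{j=1}^nH_{ij}\Delta x_j-[i\in\mathcal I_l]\Delta\lambda^{l,ls}_i+[i\in\mathcal I_u]\Delta\lambda^{u,ls}_i$. For $i\in\mathcal A_l$ take $\Delta\lambda^l_i\in\{\Delta\lambda^{l,b}_i,\Delta\lambda^{l,ls}_i\}$ with $\Delta\lambda^{l,b}_i=r_i$ and $\Delta\lambda^{l,ls}_i=\frac{r_i-(x_i-l_i)\big(\lambda^l_i(x_i-l_i)-\mu^++\lambda^l_i\Delta x_i\big)}{1+(x_i-l_i)^2}$; for $i\in\mathcal A_u$ take $\Delta\lambda^u_i\in\{\Delta\lambda^{u,b}_i,\Delta\lambda^{u,ls}_i\}$ with $\Delta\lambda^{u,b}_i=-r_i$ and $\Delta\lambda^{u,ls}_i=-\frac{r_i+(u_i-x_i)\big(\lambda^u_i(u_i-x_i)-\mu^+-\lambda^u_i\Delta x_i\big)}{1+(u_i-x_i)^2}$. Here $[\cdot]$ is 1 if the condition holds and 0 otherwise.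
   Context: General problem: minimize $f(x)$ subject to $l\le x\le u$, $l,u\in\mathbb R^n$, $l<u$, $f$ twice continuously differentiable with locally Lipschitz Hessian; multipliers $\lambda=(\lambda^l,\lambda^u)$. $F_\mu(x,\lambda)=\begin{bmatrix}\nabla f(x)-\lambda^l+\lambda^u\\ \Lambda^l(X-L)e-\mu e\\ \Lambda^u(U-X)e-\mu e\end{bmatrix}$ with $X,L,U,\Lambda^l,\Lambda^u$ the diagonal matrices of $x,l,u,\lambda^l,\lambda^u$ and $e$ all-ones; $F'(x,\lambda)=\begin{bmatrix}\nabla^2f(x)&-I&I\\ \Lambda^l&X-L&0\\ -\Lambda^u&0&U-X\end{bmatrix}$; the Newton direction solves $F'(x,\lambda)(\Delta x^N,\Delta\lambda^{l,N},\Delta\lambda^{u,N})=-F_{\mu^+}(x,\lambda)$. Euclidean norms. Partial approximations: $\Delta x_i^S=-\frac1{d_i}\big([\nabla f(x)]_i-\mu^+[\frac1{x_i-l_i}-\frac1{u_i-x_i}]\big)$ with $d_i=[\nabla^2f(x)]_{ii}+\frac{\lambda^l_i}{x_i-l_i}+\frac{\lambda^u_i}{u_i-x_i}$; $\Delta x^C_i=-(x_i-l_i)+\mu^+/\lambda^l_i$ for $i\in\mathcal A_l$, $\Delta x_i^C=(u_i-x_i)-\mu^+/\lambda^u_i$ for $i\in\mathcal A_u$; $\Delta\lambda^{l,C}_i=-\lambda^l_i+\mu^+/(x_i-l_i)$, $\Delta\lambda^{u,C}_i=-\lambda^u_i+\mu^+/(u_i-x_i)$. Sets: $\mathcal A_l=\{i:x^*_i=l_i\}$,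 $\mathcal A_u=\{i:x^*_i=u_i\}$, $\mathcal I_l,\mathcal I_u$ complements, $\mathcal A_x=\mathcal A_l\cup\mathcal A_u$, $\mathcal I_x$ its complement. Standing hypotheses: $\nabla f(x^* )-\lambda^{l*}+\lambda^{u*}=0$, $l\le x^*\le u$, $\lambda^{l*},\lambda^{u*}\ge0$, $(x^*-l)_i\lambda^{l*}_i=0$, $(u-x^* )_i\lambda^{u*}_i=0$, $(x^*-l)+\lambda^{l*}>0$, $(u-x^* )+\lambda^{u*}>0$, $[\nabla^2f(x^* )]_{\mathcal I_x\mathcal I_x}\succ0$; $\delta>0$ with $F'$ nonsingular and boundedly invertible on $\mathcal B((x^*,\lambda^* ),\delta)$; $\hat\mu>0$ with a Lipschitz barrier trajectory $(x^\mu,\lambda^\mu)\in\mathcal B((x^*,\lambda^* ),\delta)$, $F_\mu(x^\mu,\lambda^\mu)=0$, $\|(x^\mu,\lambda^\mu)-(x^*,\lambda^* )\|\le C_4\mu$ for $\mu\in(0,\hat\mu]$. *)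

theory Defs
  imports "HOL-Analysis.Analysis"
begin

text \<open>Vectors in R^n are modelled as real^'n (Euclidean norm); points (x, lambda^l, lambda^u)
  are triples in (real^'n) \<times> (real^'n) \<times> (real^'n), whose product norm is the Euclidean norm
  of the concatenated vector.  g is the gradient map, H a (Hessian) matrix, with
  (H *v v)$i = sum_j H$i$j * v$j.\<close>

definition Fmu :: "(real^'n \<Rightarrow> real^'n) \<Rightarrow> real^'n \<Rightarrow> real^'n \<Rightarrow> real
     \<Rightarrow> real^'n \<Rightarrow> real^'n \<Rightarrow> real^'n \<Rightarrow> (real^'n) \<times> (real^'n) \<times> (real^'n)" where
  "Fmu g l u \<mu> x ll lu =
     (g x - ll + lu,
      \<chi> i. ll$i * (x$i - l$i) - \<mu>,
      \<chi> i. lu$i * (u$i - x$i) - \<mu>)"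

definition Fprime :: "(real^'n \<Rightarrow> real^'n^'n) \<Rightarrow> real^'n \<Rightarrow> real^'n
     \<Rightarrow> real^'n \<Rightarrow> real^'n \<Rightarrow> real^'n
     \<Rightarrow> (real^'n) \<times> (real^'n) \<times> (real^'n) \<Rightarrow> (real^'n) \<times> (real^'n) \<times> (real^'n)" where
  "Fprime hess l u x ll lu d =
     (case d of (dx, dll, dlu) \<Rightarrow>
       (hess x *v dx - dll + dlu,
        \<chi> i. ll$i * dx$i + (x$i - l$i) * dll$i,
        \<chi> i. - lu$i * dx$i + (u$i - x$i) * dlu$i))"

definition dcoef :: "real^'n^'n \<Rightarrow> real^'n \<Rightarrow> real^'n \<Rightarrow> real^'n \<Rightarrow> real^'n \<Rightarrow> real^'n \<Rightarrow> 'n \<Rightarrow> real" where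
  "dcoef H l u x ll lu i = H$i$i + ll$i / (x$i - l$i) + lu$i / (u$i - x$i)"

definition dxS :: "real^'n \<Rightarrow> real^'n^'n \<Rightarrow> real^'n \<Rightarrow> real^'n \<Rightarrow> real^'n \<Rightarrow> real^'n \<Rightarrow> real^'n
     \<Rightarrow> real \<Rightarrow> 'n \<Rightarrow> real" where
  "dxS gx H l u x ll lu mup i =
     - (1 / dcoef H l u x ll lu i) * (gx$i - mup * (1 / (x$i - l$i) - 1 / (u$i - x$i)))"

definition dxCl :: "real^'n \<Rightarrow> real^'n \<Rightarrow> real^'n \<Rightarrow> real \<Rightarrow> 'n \<Rightarrow> real" where
  "dxCl l x ll mup i = - (x$i - l$i) + mup / ll$i"

definition dxCu :: "real^'n \<Rightarrow> real^'n \<Rightarrow> real^'n \<Rightarrow> real \<Rightarrow> 'n \<Rightarrow> real" where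
  "dxCu u x lu mup i = (u$i - x$i) - mup / lu$i"

definition dllC :: "real^'n \<Rightarrow> real^'n \<Rightarrow> real^'n \<Rightarrow> real \<Rightarrow> 'n \<Rightarrow> real" where
  "dllC l x ll mup i = - ll$i + mup / (x$i - l$i)"

definition dluC :: "real^'n \<Rightarrow> real^'n \<Rightarrow> real^'n \<Rightarrow> real \<Rightarrow> 'n \<Rightarrow> real" where
  "dluC u x lu mup i = - lu$i + mup / (u$i - x$i)"

definition ls_row :: "real^'n \<Rightarrow> real^'n^'n \<Rightarrow> real^'n \<Rightarrow> real^'n \<Rightarrow> real^'n \<Rightarrow> real^'n \<Rightarrow> real^'n
     \<Rightarrow> real \<Rightarrow> 'n set \<Rightarrow> real^'n \<Rightarrow> 'n \<Rightarrow> bool" where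
  "ls_row gx H l u x ll lu mup Ax dx i \<longleftrightarrow>
     (\<Sum>j\<in>-Ax. H$i$j * dx$j) + (ll$i / (x$i - l$i) + lu$i / (u$i - x$i)) * dx$i
     = - gx$i - (\<Sum>j\<in>Ax. H$i$j * dx$j) + mup / (x$i - l$i) - mup / (u$i - x$i)"

definition dll_lsI :: "real^'n \<Rightarrow> real^'n \<Rightarrow> real^'n \<Rightarrow> real \<Rightarrow> real^'n \<Rightarrow> 'n \<Rightarrow> real" where
  "dll_lsI l x ll mup dx i = - ll$i + (mup - ll$i * dx$i) / (x$i - l$i)"

definition dlu_lsI :: "real^'n \<Rightarrow> real^'n \<Rightarrow> real^'n \<Rightarrow> real \<Rightarrow> real^'n \<Rightarrow> 'n \<Rightarrow> real" where
  "dlu_lsI u x lu mup dx i = - lu$i + (mup + lu$i * dx$i) / (u$i - x$i)"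

definition resid :: "real^'n \<Rightarrow> real^'n^'n \<Rightarrow> real^'n \<Rightarrow> real^'n \<Rightarrow> real^'n \<Rightarrow> real^'n \<Rightarrow> real^'n
     \<Rightarrow> real \<Rightarrow> 'n set \<Rightarrow> 'n set \<Rightarrow> real^'n \<Rightarrow> 'n \<Rightarrow> real" where
  "resid gx H l u x ll lu mup Il Iu dx i =
     gx$i - ll$i + lu$i + (\<Sum>j\<in>UNIV. H$i$j * dx$j)
     - (if i \<in> Il then dll_lsI l x ll mup dx i else 0)
     + (if i \<in> Iu then dlu_lsI u x lu mup dx i else 0)"

definition dll_lsA :: "real^'n \<Rightarrow> real^'n \<Rightarrow> real^'n \<Rightarrow> real \<Rightarrow> real^'n \<Rightarrow> real \<Rightarrow> 'n \<Rightarrow> real" where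
  "dll_lsA l x ll mup dx r i =
     (r - (x$i - l$i) * (ll$i * (x$i - l$i) - mup + ll$i * dx$i)) / (1 + (x$i - l$i)^2)"

definition dlu_lsA :: "real^'n \<Rightarrow> real^'n \<Rightarrow> real^'n \<Rightarrow> real \<Rightarrow> real^'n \<Rightarrow> real \<Rightarrow> 'n \<Rightarrow> real" where
  "dlu_lsA u x lu mup dx r i =
     - (r + (u$i - x$i) * (lu$i * (u$i - x$i) - mup - lu$i * dx$i)) / (1 + (u$i - x$i)^2)"

end

theory Submission
  imports Defs
begin

text \<open>Near the solution and for small \<open>\<mu>\<close>, strict complementarity separates the two members of
  every complementary pair: one stays above a margin \<open>c0/2\<close>, the other is \<open>O(\<mu>)\<close>. Hence the
  barrier weight \<open>\<lambda>/(x - l)\<close> is of order \<open>1/\<mu>\<close> on an active bound and \<open>O(\<mu>)\<close> on an inactive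
  one, and the Newton step, given by the boundedly invertible Jacobian, is \<open>O(\<mu>)\<close>.
  Every admissible active component of \<open>\<Delta>x\<close> is then within \<open>O(\<mu>\<^sup>2)\<close> of the Newton component: the
  scaled step because its diagonal coefficient is of order \<open>1/\<mu>\<close> while the neglected coupling is
  \<open>O(\<mu>)\<close>, the centered step because the complementarity row makes the difference a product of
  a small slack and a small Newton multiplier. On the inactive indices both steps solve the same
  reduced system, which is coercive on vectors vanishing on the active set, so the error there is
  controlled by the active errors. Finally each multiplier update differs from the Newton multiplier
  by a bounded multiple of the primal error plus a product of two \<open>O(\<mu>)\<close> quantities.\<close>

section \<open>Norm estimates\<close>

lemma norm_matrix_vector_mult_le:
  fixes A :: "real^'n^'m"
  shows "norm (A *v v) \<le> norm A * norm v"
proof -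
  have row: "\<bar>(A *v v)$i\<bar> \<le> norm (A$i) * norm v" for i
    using Cauchy_Schwarz_ineq2[of "A$i" v]
    by (simp add: matrix_vector_mult_def inner_vec_def mult.commute)
  have "norm (A *v v) \<le> L2_set (\<lambda>i. norm (A$i) * norm v) UNIV"
    unfolding norm_vec_def[of "A *v v"] by (rule L2_set_mono) (use row in auto)
  also have "\<dots> = norm A * norm v"
    by (simp add: L2_set_left_distrib[symmetric] norm_vec_def[of A])
  finally show ?thesis .
qed

lemma matrix_entry_le_norm:
  fixes A :: "real^'n^'m"
  shows "\<bar>A$i$j\<bar> \<le> norm A"
  using component_le_norm_cart[of "A$i" j] Finite_Cartesian_Product.norm_nth_le[of A i] by linarith

lemma norm_le_card_mult:
  fixes v :: "real^'n"
  assumes "\<And>i. \<bar>v$i\<bar> \<le> B"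
  shows "norm v \<le> real CARD('n) * B"
proof -
  have "norm v \<le> (\<Sum>i\<in>UNIV. \<bar>v$i\<bar>)" by (rule norm_le_l1_cart)
  also have "\<dots> \<le> (\<Sum>i\<in>(UNIV::'n set). B)" by (rule sum_mono) (use assms in simp)
  finally show ?thesis by simp
qed

lemma norm_prod3_le:
  "norm (x, y, z) \<le> norm x + norm y + norm z"
  using norm_Pair_le[of x "(y, z)"] norm_Pair_le[of y z] by linarith

lemma norm_prod3_components:
  "norm x \<le> norm (x, y, z) \<and> norm y \<le> norm (x, y, z) \<and> norm z \<le> norm (x, y, z)"
  using norm_fst_le[of x "(y, z)"] norm_snd_le[of "(y, z)" x] norm_fst_le[of y z] norm_snd_le[of z y]
  by (fastforce simp del: norm_Pair)

lemma isCont_if_locally_lipschitz: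
  fixes f :: "'a::real_normed_vector \<Rightarrow> 'b::real_normed_vector"
  assumes "0 < r" and lip: "\<forall>y\<in>ball x r. \<forall>z\<in>ball x r. norm (f y - f z) \<le> L * norm (y - z)"
  shows "isCont f x"
proof -
  have "(max L 0)-lipschitz_on (ball x r) f"
  proof (rule lipschitz_onI)
    show "dist (f y) (f z) \<le> max L 0 * dist y z" if "y \<in> ball x r" "z \<in> ball x r" for y z
      using lip that mult_right_mono[of L "max L 0" "dist y z"] by (force simp: dist_norm)
  qed simp
  then show ?thesis
    using continuous_on_interior lipschitz_on_continuous_on \<open>0 < r\<close> by (metis centre_in_ball interior_ball)
qed

lemma finite_positive_lower_bound:
  fixes f :: "'a::finite \<Rightarrow> real"
  assumes "\<And>i. 0 < f i"
  obtains c where "0 < c" and "\<And>i. c \<le> f i"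
proof
  show "0 < Min (range f)" using assms by (simp add: Min_gr_iff)
  show "Min (range f) \<le> f i" for i by simp
qed

section \<open>Coercive reduced systems\<close>

lemma coercive_on_coordinate_subspace:
  fixes H :: "real^'n^'n"
  assumes pd: "\<And>v. v \<noteq> 0 \<Longrightarrow> \<forall>i\<in>A. v$i = 0 \<Longrightarrow> 0 < v \<bullet> (H *v v)"
  obtains m where "0 < m" and "\<And>v. \<forall>i\<in>A. v$i = 0 \<Longrightarrow> m * (norm v)^2 \<le> v \<bullet> (H *v v)"
proof -
  define U where "U = {v::real^'n. \<forall>i\<in>A. v$i = 0}"
  have "U = (\<Inter>i\<in>A. {v. v$i = 0})" unfolding U_def by auto
  moreover have "closed {v::real^'n. v$i = 0}" for i
    by (intro closed_Collect_eq continuous_on_component continuous_on_id continuous_on_const)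
  ultimately have "closed U" by auto
  define S where "S = sphere 0 1 \<inter> U"
  have "compact S" unfolding S_def by (rule compact_Int_closed[OF compact_sphere \<open>closed U\<close>])
  define q where "q v = v \<bullet> (H *v v)" for v
  have normalize: "(1 / norm v) *\<^sub>R v \<in> S" and q_scale: "q ((1 / norm v) *\<^sub>R v) = q v / (norm v)^2"
    if "v \<in> U" "v \<noteq> 0" for v
    using that unfolding S_def U_def q_def by (auto simp: matrix_vector_mult_scaleR power2_eq_square)
  show ?thesis
  proof (cases "S = {}")
    case True
    have "v = 0" if "\<forall>i\<in>A. v$i = 0" for v :: "real^'n"
      using normalize[of v] True that unfolding U_def by blast
    then show ?thesis by (intro that[of 1]) fastforce+
  next
    case False
    have "continuous_on S q" unfolding q_def by (intro continuous_intros)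
    then obtain v0 where "v0 \<in> S" and v0_min: "\<And>v. v \<in> S \<Longrightarrow> q v0 \<le> q v"
      using continuous_attains_inf[OF \<open>compact S\<close> False] by blast
    then have "0 < q v0" using pd[of v0] unfolding S_def U_def q_def by fastforce
    moreover have "q v0 * (norm v)^2 \<le> v \<bullet> (H *v v)" if "\<forall>i\<in>A. v$i = 0" for v
    proof (cases "v = 0")
      case False
      then have "q v0 \<le> q v / (norm v)^2"
        using v0_min[OF normalize] q_scale that unfolding U_def by simp
      then show ?thesis using False by (simp add: q_def field_simps)
    qed simp
    ultimately show ?thesis by (rule that)
  qed
qed

lemma coercive_perturbation:
  fixes H H0 :: "real^'n^'n"
  assumes coercive: "\<And>v. \<forall>i\<in>A. v$i = 0 \<Longrightarrow> m * (norm v)^2 \<le> v \<bullet> (H0 *v v)"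
    and close: "norm (H - H0) \<le> m / 2" and v: "\<forall>i\<in>A. v$i = 0"
  shows "m / 2 * (norm v)^2 \<le> v \<bullet> (H *v v)"
proof -
  have "\<bar>v \<bullet> ((H - H0) *v v)\<bar> \<le> norm v * norm ((H - H0) *v v)"
    by (rule Cauchy_Schwarz_ineq2)
  also have "\<dots> \<le> norm v * (norm (H - H0) * norm v)"
    by (intro mult_left_mono norm_matrix_vector_mult_le) simp
  also have "\<dots> \<le> m / 2 * (norm v)^2"
    using mult_right_mono[OF close, of "(norm v)^2"] by (simp add: power2_eq_square mult_ac)
  finally have "\<bar>v \<bullet> ((H - H0) *v v)\<bar> \<le> m / 2 * (norm v)^2" .
  moreover have "v \<bullet> (H *v v) = v \<bullet> (H0 *v v) + v \<bullet> ((H - H0) *v v)"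
    by (simp add: matrix_vector_mult_diff_rdistrib inner_diff_right)
  ultimately show ?thesis using coercive[OF v] by linarith
qed

lemma coercive_reduced_energy:
  fixes H :: "real^'n^'n"
  assumes coercive: "\<And>v. \<forall>i\<in>A. v$i = 0 \<Longrightarrow> m * (norm v)^2 \<le> v \<bullet> (H *v v)"
    and D_nonneg: "\<And>i. 0 \<le> D i" and w: "\<forall>i\<in>A. w$i = 0"
  shows "m * (norm w)^2 \<le> (\<Sum>i\<in>-A. w$i * ((H *v w)$i + D i * w$i))"
proof -
  have "(\<Sum>i\<in>-A. w$i * ((H *v w)$i + D i * w$i)) = (\<Sum>i\<in>UNIV. w$i * ((H *v w)$i + D i * w$i))"
    using w by (intro sum.mono_neutral_left) auto
  also have "\<dots> = w \<bullet> (H *v w) + (\<Sum>i\<in>UNIV. D i * (w$i)^2)"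
    by (simp add: inner_vec_def sum.distrib algebra_simps power2_eq_square)
  finally show ?thesis
    using coercive[OF w] sum_nonneg[of UNIV "\<lambda>i. D i * (w$i)^2"] D_nonneg by simp
qed

lemma reduced_system_unique:
  fixes H :: "real^'n^'n"
  assumes coercive: "\<And>v. \<forall>i\<in>A. v$i = 0 \<Longrightarrow> m * (norm v)^2 \<le> v \<bullet> (H *v v)"
    and "0 < m" and D_nonneg: "\<And>i. 0 \<le> D i"
  shows "\<exists>!v. (\<forall>i\<in>A. v$i = y$i) \<and> (\<forall>i\<in>-A. (H *v v)$i + D i * v$i = y$i)"
proof -
  define T where "T v = (\<chi> i. if i \<in> A then v$i else (H *v v)$i + D i * v$i)" for v :: "real^'n"
  have solves: "T v = y' \<longleftrightarrow> (\<forall>i\<in>A. v$i = y'$i) \<and> (\<forall>i\<in>-A. (H *v v)$i + D i * v$i = y'$i)"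
    for v y' unfolding T_def vec_eq_iff by auto
  have "linear T"
    unfolding T_def by (rule linearI) (auto simp: vec_eq_iff matrix_vector_right_distrib algebra_simps)
  moreover have "v = 0" if "T v = 0" for v
  proof -
    have "\<forall>i\<in>A. v$i = 0" and "\<forall>i\<in>-A. (H *v v)$i + D i * v$i = 0"
      using that solves[of v 0] by auto
    then have "m * (norm v)^2 \<le> 0"
      using coercive_reduced_energy[where A = A and D = D and w = v, OF coercive D_nonneg] by simp
    then show ?thesis using \<open>0 < m\<close> by (simp add: mult_le_0_iff)
  qed
  ultimately have "inj T" by (simp add: linear_injective_0)
  have "surj T" by (rule linear_inj_imp_surj[OF \<open>linear T\<close> \<open>inj T\<close>])
  then obtain v where "T v = y" by (metis surjD)
  moreover have "v' = v" if "T v' = y" for v'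
    using \<open>inj T\<close> \<open>T v = y\<close> that by (metis injD)
  ultimately show ?thesis unfolding solves[symmetric] by blast
qed

lemma reduced_error_bound:
  fixes H :: "real^'n^'n"
  assumes coercive: "\<And>v. \<forall>i\<in>A. v$i = 0 \<Longrightarrow> m * (norm v)^2 \<le> v \<bullet> (H *v v)"
    and "0 < m" and D_nonneg: "\<And>i. 0 \<le> D i" and "norm H \<le> Hb"
    and rows: "\<And>i. i \<notin> A \<Longrightarrow> (H *v e)$i + D i * e$i = 0"
  shows "norm e \<le> (1 + Hb / m) * norm (\<chi> i. if i \<in> A then e$i else 0)"
proof -
  define z :: "real^'n" where "z = (\<chi> i. if i \<in> A then e$i else 0)"
  define w where "w = e - z"
  have w_A: "\<forall>i\<in>A. w$i = 0" unfolding w_def z_def by simp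
  have "(H *v w)$i + D i * w$i = - (H *v z)$i" if "i \<notin> A" for i
    using rows[OF that] that by (simp add: w_def z_def matrix_vector_mult_diff_distrib)
  then have "m * (norm w)^2 \<le> (\<Sum>i\<in>-A. w$i * - (H *v z)$i)"
    using coercive_reduced_energy[where D = D, OF coercive D_nonneg w_A] by simp
  also have "\<dots> = - (w \<bullet> (H *v z))"
    using w_A by (simp add: inner_vec_def sum_negf, intro sum.mono_neutral_left) auto
  also have "\<dots> \<le> norm w * norm (H *v z)"
    using Cauchy_Schwarz_ineq2[of w "H *v z"] by linarith
  also have "\<dots> \<le> norm w * (Hb * norm z)"
    using norm_matrix_vector_mult_le[of H z] mult_right_mono[OF \<open>norm H \<le> Hb\<close>, of "norm z"]
    by (intro mult_left_mono) simp_all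
  finally have "norm w * (m * norm w) \<le> norm w * (Hb * norm z)"
    by (simp add: power2_eq_square mult_ac)
  then have "m * norm w \<le> Hb * norm z"
    using order_trans[OF norm_ge_zero \<open>norm H \<le> Hb\<close>]
    by (cases "w = 0") (simp_all add: mult_le_cancel_left_pos)
  then have "norm w \<le> Hb / m * norm z" using \<open>0 < m\<close> by (simp add: field_simps)
  moreover have "norm e \<le> norm w + norm z" unfolding w_def using norm_triangle_ineq[of "e - z" z] by simp
  ultimately show ?thesis unfolding z_def by (simp add: algebra_simps)
qed

section \<open>Scalar complementarity rows\<close>

lemma complementarity_row_solve:
  fixes L t mp p b q :: real
  assumes row: "L * p + t * b = - (L * t - mp)" and "t \<noteq> 0"
  shows "- L + (mp - L * q) / t - b = L / t * (p - q)"
    and "- L + mp / t - b = (L / t) * p"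
    and "L \<noteq> 0 \<Longrightarrow> - t + mp / L - p = t * b / L"
  using assms by (auto simp: field_simps)

lemma regularized_update_error:
  fixes L t mp p b q r :: real
  assumes row: "L * p + t * b = - (L * t - mp)"
  shows "\<bar>(r - t * (L * t - mp + L * q)) / (1 + t^2) - b\<bar> \<le> \<bar>r - b\<bar> + \<bar>t * L * (q - p)\<bar>"
proof -
  have pos: "0 < 1 + t^2" by (simp add: add_pos_nonneg)
  have "r - t * (L * t - mp + L * q) - b * (1 + t^2)
      = (r - b) - t * L * (q - p) - t * (L * p + t * b + (L * t - mp))"
    by (simp add: algebra_simps power2_eq_square)
  moreover have "L * p + t * b + (L * t - mp) = 0" using row by simp
  ultimately have "r - t * (L * t - mp + L * q) = ((r - b) - t * L * (q - p)) + b * (1 + t^2)"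
    by simp
  then have "(r - t * (L * t - mp + L * q)) / (1 + t^2) - b = ((r - b) - t * L * (q - p)) / (1 + t^2)"
    using pos by (simp only:) (simp add: add_divide_distrib)
  also have "\<bar>\<dots>\<bar> \<le> \<bar>(r - b) - t * L * (q - p)\<bar>"
    using pos by (simp add: abs_divide divide_le_eq mult_le_cancel_left1 abs_of_pos)
  also have "\<dots> \<le> \<bar>r - b\<bar> + \<bar>t * L * (q - p)\<bar>" by (rule abs_triangle_ineq4)
  finally show ?thesis .
qed

lemma complementary_pair_split:
  fixes s y s' y' c \<mu> K :: real
  assumes compl: "s' * y' = 0" and margin: "c \<le> s' + y'" and "0 < c"
    and close: "\<bar>s - s'\<bar> \<le> c / 2" "\<bar>y - y'\<bar> \<le> c / 2" and "0 < s" "0 < y"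
    and centered: "\<bar>y * s - \<mu>\<bar> \<le> K * \<mu>"
  shows "s' = 0 \<Longrightarrow> c / 2 \<le> y \<and> s \<le> 2 * (1 + K) / c * \<mu>"
    and "s' \<noteq> 0 \<Longrightarrow> c / 2 \<le> s \<and> y \<le> 2 * (1 + K) / c * \<mu>"
proof -
  have bound: "v \<le> 2 * (1 + K) / c * \<mu>" if "c / 2 \<le> w" "0 < v" "y * s = w * v" for v w
  proof -
    have "c / 2 * v \<le> w * v" using that by (simp add: mult_right_mono)
    also have "\<dots> \<le> (1 + K) * \<mu>" using centered that(3) by (simp add: algebra_simps)
    finally show ?thesis using \<open>0 < c\<close> by (simp add: field_simps)
  qed
  show "s' = 0 \<Longrightarrow> c / 2 \<le> y \<and> s \<le> 2 * (1 + K) / c * \<mu>"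
  proof -
    assume "s' = 0"
    then have "c / 2 \<le> y" using margin close(2) by linarith
    then show ?thesis using bound[of y s] \<open>0 < s\<close> by simp
  qed
  show "s' \<noteq> 0 \<Longrightarrow> c / 2 \<le> s \<and> y \<le> 2 * (1 + K) / c * \<mu>"
  proof -
    assume "s' \<noteq> 0"
    then have "c \<le> s'" using compl margin by simp
    then have "c / 2 \<le> s" using close(1) by linarith
    then show ?thesis using bound[of s y] \<open>0 < y\<close> by (simp add: mult.commute)
  qed
qed

section \<open>The barrier system and the modified direction\<close>

definition barrier_weight :: "real^'n \<Rightarrow> real^'n \<Rightarrow> real^'n \<Rightarrow> real^'n \<Rightarrow> real^'n \<Rightarrow> 'n \<Rightarrow> real" where
  "barrier_weight l u x ll lu i = ll$i / (x$i - l$i) + lu$i / (u$i - x$i)"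

lemma dcoef_eq: "dcoef H l u x ll lu i = H$i$i + barrier_weight l u x ll lu i"
  by (simp add: dcoef_def barrier_weight_def)

lemma ls_row_iff:
  "ls_row g H l u x ll lu mp A dx i \<longleftrightarrow>
     (H *v dx)$i + barrier_weight l u x ll lu i * dx$i
       = - g$i + mp / (x$i - l$i) - mp / (u$i - x$i)"
proof -
  have "(H *v dx)$i = (\<Sum>j\<in>-A. H$i$j * dx$j) + (\<Sum>j\<in>A. H$i$j * dx$j)"
    by (simp add: matrix_vector_mult_def sum.subset_diff[of A UNIV] Compl_eq_Diff_UNIV)
  then show ?thesis unfolding ls_row_def barrier_weight_def by argo
qed

text \<open>Steps (i)--(ii) and (iii)--(iv) of the modified direction; \<open>mp\<close> stands for \<open>\<mu>\<^sup>+\<close>.\<close>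

definition primal_step :: "real^'n \<Rightarrow> real^'n^'n \<Rightarrow> real^'n \<Rightarrow> real^'n \<Rightarrow> real^'n \<Rightarrow> real^'n
     \<Rightarrow> real^'n \<Rightarrow> real \<Rightarrow> 'n set \<Rightarrow> 'n set \<Rightarrow> real^'n \<Rightarrow> bool" where
  "primal_step g H l u x ll lu mp Al Au dx \<longleftrightarrow>
     (\<forall>i\<in>Al. dx$i = dxS g H l u x ll lu mp i \<or> dx$i = dxCl l x ll mp i)
     \<and> (\<forall>i\<in>Au. dx$i = dxS g H l u x ll lu mp i \<or> dx$i = dxCu u x lu mp i)
     \<and> (\<forall>i\<in>-(Al \<union> Au). ls_row g H l u x ll lu mp (Al \<union> Au) dx i)"

definition multiplier_step :: "real^'n \<Rightarrow> real^'n^'n \<Rightarrow> real^'n \<Rightarrow> real^'n \<Rightarrow> real^'n \<Rightarrow> real^'n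
     \<Rightarrow> real^'n \<Rightarrow> real \<Rightarrow> 'n set \<Rightarrow> 'n set \<Rightarrow> real^'n \<Rightarrow> real^'n \<Rightarrow> real^'n \<Rightarrow> bool" where
  "multiplier_step g H l u x ll lu mp Al Au dx dll dlu \<longleftrightarrow>
     (\<forall>i\<in>-Al. dll$i = dll_lsI l x ll mp dx i \<or> dll$i = dllC l x ll mp i)
     \<and> (\<forall>i\<in>-Au. dlu$i = dlu_lsI u x lu mp dx i \<or> dlu$i = dluC u x lu mp i)
     \<and> (\<forall>i\<in>Al. dll$i = resid g H l u x ll lu mp (-Al) (-Au) dx i
                \<or> dll$i = dll_lsA l x ll mp dx (resid g H l u x ll lu mp (-Al) (-Au) dx i) i)
     \<and> (\<forall>i\<in>Au. dlu$i = - resid g H l u x ll lu mp (-Al) (-Au) dx i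
                \<or> dlu$i = dlu_lsA u x lu mp dx (resid g H l u x ll lu mp (-Al) (-Au) dx i) i)"

lemma newton_system_components:
  assumes "Fprime hess l u x ll lu (a, b, c) = - Fmu grad l u mp x ll lu"
  shows "hess x *v a - b + c = - (grad x - ll + lu)"
    and "\<And>i. ll$i * a$i + (x$i - l$i) * b$i = - (ll$i * (x$i - l$i) - mp)"
    and "\<And>i. - lu$i * a$i + (u$i - x$i) * c$i = - (lu$i * (u$i - x$i) - mp)"
  using assms by (auto simp: Fprime_def Fmu_def vec_eq_iff)

lemma Fmu_complementarity_le:
  fixes x :: "real^'n"
  assumes "norm (Fmu g l u \<mu> x ll lu) \<le> B"
  shows "\<bar>ll$i * (x$i - l$i) - \<mu>\<bar> \<le> B" and "\<bar>lu$i * (u$i - x$i) - \<mu>\<bar> \<le> B"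
proof -
  define p :: "real^'n" where "p = (\<chi> i. ll$i * (x$i - l$i) - \<mu>)"
  define q :: "real^'n" where "q = (\<chi> i. lu$i * (u$i - x$i) - \<mu>)"
  have "norm p \<le> B" "norm q \<le> B"
    using assms norm_prod3_components[of "g x - ll + lu" p q]
    unfolding Fmu_def p_def q_def by linarith+
  then show "\<bar>ll$i * (x$i - l$i) - \<mu>\<bar> \<le> B" and "\<bar>lu$i * (u$i - x$i) - \<mu>\<bar> \<le> B"
    using component_le_norm_cart[of p i] component_le_norm_cart[of q i] unfolding p_def q_def by auto
qed

lemma Fmu_centering_change:
  fixes g :: "real^'n \<Rightarrow> real^'n" and \<mu> \<mu>' :: real
  shows "norm (Fmu g l u \<mu>' x ll lu - Fmu g l u \<mu> x ll lu) \<le> 2 * real CARD('n) * \<bar>\<mu> - \<mu>'\<bar>"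
proof -
  define k :: "real^'n" where "k = (\<chi> i. \<mu> - \<mu>')"
  have "Fmu g l u \<mu>' x ll lu - Fmu g l u \<mu> x ll lu = (0, k, k)"
    unfolding Fmu_def k_def by (simp add: vec_eq_iff)
  moreover have "norm k \<le> real CARD('n) * \<bar>\<mu> - \<mu>'\<bar>" by (rule norm_le_card_mult) (simp add: k_def)
  ultimately show ?thesis using norm_prod3_le[of "0::real^'n" k k] by simp
qed

lemma newton_step_norm_le:
  fixes grad :: "real^'n \<Rightarrow> real^'n"
  assumes "bij F" and inv_bound: "\<And>v. norm (inv F v) \<le> M * norm v"
    and newton: "F dN = - Fmu grad l u (\<sigma> * \<mu>) x ll lu"
    and centered: "norm (Fmu grad l u \<mu> x ll lu) \<le> C1 * \<mu>" and "0 \<le> \<sigma>" "\<sigma> \<le> 1" "0 \<le> \<mu>"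
  shows "norm dN \<le> \<bar>M\<bar> * (C1 + 2 * real CARD('n)) * \<mu>"
proof -
  let ?F = "Fmu grad l u (\<sigma> * \<mu>) x ll lu"
  have "\<bar>\<mu> - \<sigma> * \<mu>\<bar> \<le> \<mu>" using assms(5-7) by (simp add: mult_left_le_one_le)
  then have "norm (?F - Fmu grad l u \<mu> x ll lu) \<le> 2 * real CARD('n) * \<mu>"
    using Fmu_centering_change[of grad l u "\<sigma> * \<mu>" x ll lu \<mu>] mult_left_mono[of _ \<mu> "2 * real CARD('n)"]
    by (meson of_nat_0_le_iff order_trans zero_le_mult_iff zero_le_numeral)
  then have F_le: "norm ?F \<le> (C1 + 2 * real CARD('n)) * \<mu>"
    using norm_triangle_ineq[of "Fmu grad l u \<mu> x ll lu" "?F - Fmu grad l u \<mu> x ll lu"] centered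
    by (simp add: algebra_simps)
  have "dN = inv F (- ?F)" using newton \<open>bij F\<close> by (metis bij_inv_eq_iff)
  then have "norm dN \<le> M * norm ?F" using inv_bound[of "- ?F"] by simp
  also have "\<dots> \<le> \<bar>M\<bar> * norm ?F" by (simp add: mult_right_mono)
  also have "\<dots> \<le> \<bar>M\<bar> * ((C1 + 2 * real CARD('n)) * \<mu>)" by (rule mult_left_mono[OF F_le]) simp
  finally show ?thesis by (simp add: mult.assoc)
qed

section \<open>Error of the modified direction\<close>

text \<open>\<open>c0\<close> is the strict-complementarity margin, \<open>Kp * \<mu>\<close> bounds the small member of each
  complementary pair, and \<open>m\<close> is the coercivity constant of \<open>H\<close> on the inactive coordinates.\<close>

locale barrier_regime =
  fixes H :: "real^'n^'n" and l u x ll lu :: "real^'n" and Al Au :: "'n set"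
    and \<mu> c0 Kp Hb Lb m :: real
  assumes interior: "\<And>i. l$i < x$i" "\<And>i. x$i < u$i" "\<And>i. 0 < ll$i" "\<And>i. 0 < lu$i"
    and active_disjoint: "Al \<inter> Au = {}"
    and c0_pos: "0 < c0" and Kp_pos: "0 < Kp" and \<mu>_pos: "0 < \<mu>"
    and Kp_\<mu>_le_1: "Kp * \<mu> \<le> 1" and Hb_\<mu>_small: "4 * Kp * Hb * \<mu> \<le> c0"
    and norm_H_le: "norm H \<le> Hb"
    and m_pos: "0 < m"
    and coercive: "\<And>v. \<forall>i\<in>Al \<union> Au. v$i = 0 \<Longrightarrow> m * (norm v)^2 \<le> v \<bullet> (H *v v)"
    and multipliers_le: "\<And>i. ll$i \<le> Lb" "\<And>i. lu$i \<le> Lb"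
    and lower_active: "\<And>i. i \<in> Al \<Longrightarrow> c0 / 2 \<le> ll$i \<and> x$i - l$i \<le> Kp * \<mu>"
    and lower_inactive: "\<And>i. i \<notin> Al \<Longrightarrow> c0 / 2 \<le> x$i - l$i \<and> ll$i \<le> Kp * \<mu>"
    and upper_active: "\<And>i. i \<in> Au \<Longrightarrow> c0 / 2 \<le> lu$i \<and> u$i - x$i \<le> Kp * \<mu>"
    and upper_inactive: "\<And>i. i \<notin> Au \<Longrightarrow> c0 / 2 \<le> u$i - x$i \<and> lu$i \<le> Kp * \<mu>"
begin

lemma Hb_nonneg: "0 \<le> Hb"
  using norm_H_le norm_ge_zero order_trans by blast

lemma entry_le_Hb: "\<bar>H$i$j\<bar> \<le> Hb"
  using matrix_entry_le_norm norm_H_le order_trans by blast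

lemma H_mult_component_le: "\<bar>(H *v v)$i\<bar> \<le> Hb * norm v"
  using component_le_norm_cart[of "H *v v" i] norm_matrix_vector_mult_le[of H v]
    mult_right_mono[OF norm_H_le norm_ge_zero[of v]] by linarith

lemma barrier_weight_nonneg: "0 \<le> barrier_weight l u x ll lu i"
  using interior[of i] unfolding barrier_weight_def by simp

lemma barrier_ratio_le:
  assumes "0 < s" "0 \<le> L" "c0 / 2 \<le> s" "L \<le> Kp * \<mu>"
  shows "L / s \<le> 2 * Kp * \<mu> / c0" and "L / s \<le> 2 / c0"
proof -
  have "L / s \<le> Kp * \<mu> / (c0 / 2)"
    by (rule frac_le) (use assms c0_pos Kp_pos \<mu>_pos in auto)
  then show "L / s \<le> 2 * Kp * \<mu> / c0" by (simp add: mult_ac)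
  also have "\<dots> \<le> 2 / c0" using Kp_\<mu>_le_1 c0_pos by (simp add: divide_right_mono)
  finally show "L / s \<le> 2 / c0" .
qed

lemma lower_inactive_ratio:
  "i \<notin> Al \<Longrightarrow> ll$i / (x$i - l$i) \<le> 2 * Kp * \<mu> / c0 \<and> ll$i / (x$i - l$i) \<le> 2 / c0"
  using barrier_ratio_le[of "x$i - l$i" "ll$i"] lower_inactive interior[of i] by auto

lemma upper_inactive_ratio:
  "i \<notin> Au \<Longrightarrow> lu$i / (u$i - x$i) \<le> 2 * Kp * \<mu> / c0 \<and> lu$i / (u$i - x$i) \<le> 2 / c0"
  using barrier_ratio_le[of "u$i - x$i" "lu$i"] upper_inactive interior[of i] by auto

text \<open>On the active set one barrier term is of order \<open>1/\<mu>\<close> and dominates the bounded diagonal entry.\<close>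

lemma dcoef_active_ge:
  assumes "i \<in> Al \<union> Au"
  shows "c0 / (4 * Kp * \<mu>) \<le> dcoef H l u x ll lu i"
proof -
  have ratio: "c0 / (2 * Kp * \<mu>) \<le> L / s" if "0 < s" "s \<le> Kp * \<mu>" "c0 / 2 \<le> L" for s L
  proof -
    have "(c0 / 2) / (Kp * \<mu>) \<le> L / s" by (rule frac_le) (use that c0_pos in auto)
    then show ?thesis by (simp add: mult.assoc)
  qed
  have "c0 / (2 * Kp * \<mu>) \<le> barrier_weight l u x ll lu i"
    using assms ratio[of "x$i - l$i" "ll$i"] ratio[of "u$i - x$i" "lu$i"]
      lower_active upper_active interior[of i] unfolding barrier_weight_def
    by (auto intro: add_increasing add_increasing2)
  moreover have "Hb \<le> c0 / (4 * Kp * \<mu>)"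
    using Hb_\<mu>_small Kp_pos \<mu>_pos by (simp add: le_divide_eq mult_ac)
  ultimately show ?thesis using entry_le_Hb[of i i] unfolding dcoef_eq by simp
qed

lemma dcoef_active_pos: "i \<in> Al \<union> Au \<Longrightarrow> 0 < dcoef H l u x ll lu i"
  using dcoef_active_ge c0_pos Kp_pos \<mu>_pos
  by (meson divide_pos_pos less_le_trans mult_pos_pos zero_less_numeral)

lemma reduced_step_unique:
  "\<exists>!dx. (\<forall>i\<in>Al \<union> Au. dx$i = dxA$i) \<and> (\<forall>i\<in>-(Al \<union> Au). ls_row g H l u x ll lu mp (Al \<union> Au) dx i)"
  using reduced_system_unique[where A = "Al \<union> Au" and D = "barrier_weight l u x ll lu",
      OF coercive m_pos barrier_weight_nonneg,
      where y = "\<chi> i. if i \<in> Al \<union> Au then dxA$i else - g$i + mp / (x$i - l$i) - mp / (u$i - x$i)"]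
  unfolding ls_row_iff by simp

end

definition direction_error_bound :: "real \<Rightarrow> real \<Rightarrow> real \<Rightarrow> real \<Rightarrow> real \<Rightarrow> real \<Rightarrow> real \<Rightarrow> real" where
  "direction_error_bound n c0 Kp Kd Hb Lb m =
     (1 + 2 * n * (2 / c0 + Hb + Lb)) * ((1 + Hb / m) * n * (8 * Kp * Kd * (Hb + 1) / c0))
     + 4 * n * Kp * Kd / c0"

text \<open>No relation between \<open>mp\<close> and \<open>\<mu>\<close> is needed: \<open>mp\<close> enters the Newton system and the modified
  direction in the same way and cancels from every error.\<close>

locale newton_regime = barrier_regime +
  fixes g a b c :: "real^'n" and mp Kd :: real
  assumes newton_dual: "H *v a - b + c = - (g - ll + lu)"
    and newton_lower: "\<And>i. ll$i * a$i + (x$i - l$i) * b$i = - (ll$i * (x$i - l$i) - mp)"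
    and newton_upper: "\<And>i. - lu$i * a$i + (u$i - x$i) * c$i = - (lu$i * (u$i - x$i) - mp)"
    and newton_small: "norm (a, b, c) \<le> Kd * \<mu>"
begin

text \<open>The upper-bound rows are lower-bound rows for \<open>-a\<close>, so the scalar lemmas serve both sides.\<close>

lemma newton_upper_mirrored: "lu$i * (- a$i) + (u$i - x$i) * c$i = - (lu$i * (u$i - x$i) - mp)"
  using newton_upper[of i] by simp

lemma newton_norms: "norm a \<le> Kd * \<mu>" "\<bar>a$i\<bar> \<le> Kd * \<mu>" "\<bar>b$i\<bar> \<le> Kd * \<mu>" "\<bar>c$i\<bar> \<le> Kd * \<mu>"
proof -
  show "norm a \<le> Kd * \<mu>" using norm_prod3_components[of a b c] newton_small by linarith
  then show "\<bar>a$i\<bar> \<le> Kd * \<mu>" using component_le_norm_cart[of a i] by linarith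
  show "\<bar>b$i\<bar> \<le> Kd * \<mu>"
    using norm_prod3_components[of a b c] newton_small component_le_norm_cart[of b i] by linarith
  show "\<bar>c$i\<bar> \<le> Kd * \<mu>"
    using norm_prod3_components[of a b c] newton_small component_le_norm_cart[of c i] by linarith
qed

lemma Kd_nonneg: "0 \<le> Kd"
proof -
  have "0 \<le> Kd * \<mu>" using newton_norms(1) norm_ge_zero[of a] by linarith
  then show ?thesis using \<mu>_pos by (simp add: zero_le_mult_iff)
qed

lemma newton_reduced_row: "ls_row g H l u x ll lu mp A a i"
proof -
  have s: "x$i - l$i \<noteq> 0" and t: "u$i - x$i \<noteq> 0" using interior[of i] by auto
  have "b$i = - ll$i + mp / (x$i - l$i) - ll$i / (x$i - l$i) * a$i"
    using complementarity_row_solve(2)[OF newton_lower s]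
      complementarity_row_solve(1)[OF newton_lower s, of 0]
    by (simp add: field_simps)
  moreover have "c$i = - lu$i + mp / (u$i - x$i) + lu$i / (u$i - x$i) * a$i"
    using complementarity_row_solve(2)[OF newton_upper_mirrored t]
      complementarity_row_solve(1)[OF newton_upper_mirrored t, of 0]
    by (simp add: field_simps)
  moreover have "(H *v a)$i - b$i + c$i = - (g$i - ll$i + lu$i)"
    using newton_dual by (simp add: vec_eq_iff)
  ultimately show ?thesis unfolding ls_row_iff barrier_weight_def by (simp add: algebra_simps)
qed

lemma scaled_step_error:
  assumes "i \<in> Al \<union> Au" and dx: "dx$i = dxS g H l u x ll lu mp i"
  shows "\<bar>dx$i - a$i\<bar> \<le> 8 * Hb * Kp * Kd / c0 * \<mu>^2"
proof -
  define d where "d = dcoef H l u x ll lu i"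
  have d_ge: "c0 / (4 * Kp * \<mu>) \<le> d" and "0 < d"
    using dcoef_active_ge[OF assms(1)] dcoef_active_pos[OF assms(1)] unfolding d_def by auto
  have "d * dx$i = - (g$i - mp * (1 / (x$i - l$i) - 1 / (u$i - x$i)))"
    using dx \<open>0 < d\<close> unfolding dxS_def d_def[symmetric] by simp
  then have "d * dx$i = - g$i + mp / (x$i - l$i) - mp / (u$i - x$i)"
    by (simp add: right_diff_distrib)
  moreover have "(H *v a)$i + barrier_weight l u x ll lu i * a$i
      = - g$i + mp / (x$i - l$i) - mp / (u$i - x$i)"
    using newton_reduced_row unfolding ls_row_iff .
  ultimately have "d * (dx$i - a$i) = (H *v a)$i - H$i$i * a$i"
    unfolding d_def dcoef_eq by (simp add: algebra_simps)
  moreover have "\<bar>(H *v a)$i - H$i$i * a$i\<bar> \<le> 2 * Hb * Kd * \<mu>"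
  proof -
    have "\<bar>(H *v a)$i\<bar> \<le> Hb * (Kd * \<mu>)"
      using H_mult_component_le[of a i] mult_left_mono[OF newton_norms(1) Hb_nonneg] by linarith
    moreover have "\<bar>H$i$i * a$i\<bar> \<le> Hb * (Kd * \<mu>)"
      unfolding abs_mult using entry_le_Hb newton_norms(2) Hb_nonneg by (rule mult_mono) simp
    ultimately show ?thesis by linarith
  qed
  ultimately have "\<bar>dx$i - a$i\<bar> = \<bar>(H *v a)$i - H$i$i * a$i\<bar> / d"
    using \<open>0 < d\<close> by (metis abs_divide abs_of_pos nonzero_mult_div_cancel_left order_less_irrefl)
  also have "\<dots> \<le> (2 * Hb * Kd * \<mu>) / (c0 / (4 * Kp * \<mu>))"
    by (rule frac_le) (use \<open>_ \<le> 2 * Hb * Kd * \<mu>\<close> d_ge c0_pos Kp_pos \<mu>_pos in auto)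
  also have "\<dots> = 8 * Hb * Kp * Kd / c0 * \<mu>^2"
    using c0_pos by (simp add: field_simps power2_eq_square)
  finally show ?thesis .
qed

lemma centered_step_error_bound:
  assumes "0 < L" "c0 / 2 \<le> L" "0 < t" "t \<le> Kp * \<mu>" "\<bar>y\<bar> \<le> Kd * \<mu>"
  shows "\<bar>t * y / L\<bar> \<le> 2 * Kp * Kd / c0 * \<mu>^2"
proof -
  have "\<bar>t * y / L\<bar> \<le> (Kp * \<mu>) * (Kd * \<mu>) / (c0 / 2)"
    unfolding abs_divide abs_mult
    by (rule frac_le) (use assms c0_pos Kp_pos \<mu>_pos Kd_nonneg in \<open>auto intro!: mult_mono\<close>)
  also have "\<dots> = 2 * Kp * Kd / c0 * \<mu>^2" by (simp add: field_simps power2_eq_square)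
  finally show ?thesis .
qed

lemma centered_lower_step_error:
  assumes "i \<in> Al" and dx: "dx$i = dxCl l x ll mp i"
  shows "\<bar>dx$i - a$i\<bar> \<le> 2 * Kp * Kd / c0 * \<mu>^2"
proof -
  have "dx$i - a$i = (x$i - l$i) * b$i / ll$i"
    using complementarity_row_solve(3)[OF newton_lower] interior[of i] dx by (simp add: dxCl_def)
  then show ?thesis
    using centered_step_error_bound lower_active[OF assms(1)] interior[of i] newton_norms(3) by simp
qed

lemma centered_upper_step_error:
  assumes "i \<in> Au" and dx: "dx$i = dxCu u x lu mp i"
  shows "\<bar>dx$i - a$i\<bar> \<le> 2 * Kp * Kd / c0 * \<mu>^2"
proof -
  have "- (u$i - x$i) + mp / lu$i - (- a$i) = (u$i - x$i) * c$i / lu$i"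
    using complementarity_row_solve(3)[OF newton_upper_mirrored[of i]] interior[of i] by simp
  then have "dx$i - a$i = - ((u$i - x$i) * c$i / lu$i)"
    using dx unfolding dxCu_def by linarith
  then show ?thesis
    using centered_step_error_bound upper_active[OF assms(1)] interior[of i] newton_norms(4) by simp
qed

lemma active_primal_error:
  assumes "primal_step g H l u x ll lu mp Al Au dx" and "i \<in> Al \<union> Au"
  shows "\<bar>dx$i - a$i\<bar> \<le> 8 * Kp * Kd * (Hb + 1) / c0 * \<mu>^2"
proof -
  have "8 * Hb * Kp * Kd / c0 * \<mu>^2 \<le> 8 * Kp * Kd * (Hb + 1) / c0 * \<mu>^2"
    and "2 * Kp * Kd / c0 * \<mu>^2 \<le> 8 * Kp * Kd * (Hb + 1) / c0 * \<mu>^2"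
    using Hb_nonneg Kp_pos Kd_nonneg c0_pos
    by (auto intro!: mult_right_mono divide_right_mono simp: algebra_simps)
  then show ?thesis
    using assms scaled_step_error centered_lower_step_error centered_upper_step_error
    unfolding primal_step_def by fastforce
qed

lemma primal_error:
  assumes "primal_step g H l u x ll lu mp Al Au dx"
  shows "norm (dx - a) \<le> (1 + Hb / m) * real CARD('n) * (8 * Kp * Kd * (Hb + 1) / c0) * \<mu>^2"
proof -
  have "(H *v (dx - a))$i + barrier_weight l u x ll lu i * (dx - a)$i = 0" if "i \<notin> Al \<union> Au" for i
  proof -
    have "ls_row g H l u x ll lu mp (Al \<union> Au) dx i" using assms that unfolding primal_step_def by blast
    with newton_reduced_row[of "Al \<union> Au" i] show ?thesis
      unfolding ls_row_iff by (simp add: matrix_vector_mult_diff_distrib algebra_simps)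
  qed
  then have "norm (dx - a) \<le> (1 + Hb / m) * norm (\<chi> i. if i \<in> Al \<union> Au then (dx - a)$i else 0)"
    by (intro reduced_error_bound[where D = "barrier_weight l u x ll lu", OF coercive m_pos
          barrier_weight_nonneg norm_H_le]) auto
  also have "\<dots> \<le> (1 + Hb / m) * (real CARD('n) * (8 * Kp * Kd * (Hb + 1) / c0 * \<mu>^2))"
    using active_primal_error[OF assms] Kp_pos Kd_nonneg Hb_nonneg c0_pos m_pos
    by (intro mult_left_mono norm_le_card_mult) auto
  finally show ?thesis by (simp add: mult_ac)
qed

lemma resid_lower_active:
  assumes "i \<in> Al"
  shows "resid g H l u x ll lu mp (-Al) (-Au) dx i - b$i
           = (H *v (dx - a))$i + lu$i / (u$i - x$i) * (dx$i - a$i)"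
proof -
  have "i \<notin> Au" using assms active_disjoint by auto
  have "resid g H l u x ll lu mp (-Al) (-Au) dx i
      = g$i - ll$i + lu$i + (H *v dx)$i + dlu_lsI u x lu mp dx i"
    using assms \<open>i \<notin> Au\<close> by (simp add: resid_def matrix_vector_mult_def)
  moreover have "dlu_lsI u x lu mp dx i - c$i = lu$i / (u$i - x$i) * (dx$i - a$i)"
    using complementarity_row_solve(1)[OF newton_upper_mirrored[of i], of "- dx$i"] interior[of i]
    unfolding dlu_lsI_def by simp
  moreover have "(H *v a)$i - b$i + c$i = - (g$i - ll$i + lu$i)"
    using newton_dual by (simp add: vec_eq_iff)
  moreover have "(H *v (dx - a))$i = (H *v dx)$i - (H *v a)$i"
    by (simp add: matrix_vector_mult_diff_distrib)
  ultimately show ?thesis by linarith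
qed

lemma resid_upper_active:
  assumes "i \<in> Au"
  shows "- resid g H l u x ll lu mp (-Al) (-Au) dx i - c$i
           = - (H *v (dx - a))$i + ll$i / (x$i - l$i) * (a$i - dx$i)"
proof -
  have "i \<notin> Al" using assms active_disjoint by auto
  have "resid g H l u x ll lu mp (-Al) (-Au) dx i
      = g$i - ll$i + lu$i + (H *v dx)$i - dll_lsI l x ll mp dx i"
    using assms \<open>i \<notin> Al\<close> by (simp add: resid_def matrix_vector_mult_def)
  moreover have "dll_lsI l x ll mp dx i - b$i = ll$i / (x$i - l$i) * (a$i - dx$i)"
    using complementarity_row_solve(1)[OF newton_lower[of i], of "dx$i"] interior[of i]
    unfolding dll_lsI_def by simp
  moreover have "(H *v a)$i - b$i + c$i = - (g$i - ll$i + lu$i)"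
    using newton_dual by (simp add: vec_eq_iff)
  moreover have "(H *v (dx - a))$i = (H *v dx)$i - (H *v a)$i"
    by (simp add: matrix_vector_mult_diff_distrib)
  ultimately show ?thesis by linarith
qed

lemma inactive_multiplier_error:
  assumes "0 < t" "c0 / 2 \<le> t" "0 \<le> L" "L \<le> Kp * \<mu>"
    and row: "L * p + t * b' = - (L * t - mp)" and "\<bar>p\<bar> \<le> Kd * \<mu>" and "\<bar>q - p\<bar> \<le> E"
    and d: "d = - L + (mp - L * q) / t \<or> d = - L + mp / t"
  shows "\<bar>d - b'\<bar> \<le> 2 / c0 * E + 2 * Kp * Kd / c0 * \<mu>^2"
proof -
  have ratio: "L / t \<le> 2 * Kp * \<mu> / c0" "L / t \<le> 2 / c0" using barrier_ratio_le assms by auto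
  have "0 \<le> E" "0 \<le> L / t" using assms by auto
  from d have "\<bar>d - b'\<bar> \<le> 2 / c0 * E \<or> \<bar>d - b'\<bar> \<le> 2 * Kp * \<mu> / c0 * (Kd * \<mu>)"
  proof
    assume "d = - L + (mp - L * q) / t"
    then have "\<bar>d - b'\<bar> = L / t * \<bar>q - p\<bar>"
      using complementarity_row_solve(1)[OF row, of q] \<open>0 < t\<close> \<open>0 \<le> L\<close>
      by (simp add: abs_mult abs_minus_commute)
    then show ?thesis using mult_mono[OF ratio(2) \<open>\<bar>q - p\<bar> \<le> E\<close>] c0_pos by auto
  next
    assume "d = - L + mp / t"
    then have "\<bar>d - b'\<bar> = L / t * \<bar>p\<bar>"
      using complementarity_row_solve(2)[OF row] \<open>0 < t\<close> \<open>0 \<le> L\<close> by (simp add: abs_mult)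
    then show ?thesis using mult_mono[OF ratio(1) \<open>\<bar>p\<bar> \<le> Kd * \<mu>\<close>] Kp_pos c0_pos \<mu>_pos by auto
  qed
  moreover have "2 * Kp * \<mu> / c0 * (Kd * \<mu>) = 2 * Kp * Kd / c0 * \<mu>^2" by (simp add: power2_eq_square)
  moreover have "0 \<le> 2 * Kp * Kd / c0 * \<mu>^2" "0 \<le> 2 / c0 * E"
    using Kp_pos Kd_nonneg c0_pos \<open>0 \<le> E\<close> by auto
  ultimately show ?thesis by linarith
qed

lemma active_multiplier_error:
  assumes "0 < t" "t \<le> Kp * \<mu>" "0 \<le> L" "L \<le> Lb"
    and row: "L * p + t * b' = - (L * t - mp)" and "\<bar>q - p\<bar> \<le> E"
    and r: "\<bar>r - b'\<bar> \<le> (2 / c0 + Hb) * E"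
    and d: "d = r \<or> d = (r - t * (L * t - mp + L * q)) / (1 + t^2)"
  shows "\<bar>d - b'\<bar> \<le> (2 / c0 + Hb + Lb) * E + 2 * Kp * Kd / c0 * \<mu>^2"
proof -
  have "\<bar>t * L * (q - p)\<bar> \<le> 1 * Lb * E"
    unfolding abs_mult using assms Kp_\<mu>_le_1 by (intro mult_mono) auto
  moreover have "\<bar>d - b'\<bar> \<le> \<bar>r - b'\<bar> + \<bar>t * L * (q - p)\<bar>"
    using d regularized_update_error[OF row, of r q] by auto
  moreover have "0 \<le> 2 * Kp * Kd / c0 * \<mu>^2" using Kp_pos Kd_nonneg c0_pos by auto
  ultimately show ?thesis using r by (simp add: algebra_simps)
qed

lemma lower_multiplier_error:
  assumes step: "multiplier_step g H l u x ll lu mp Al Au dx dll dlu" and err: "norm (dx - a) \<le> E"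
  shows "\<bar>dll$i - b$i\<bar> \<le> (2 / c0 + Hb + Lb) * E + 2 * Kp * Kd / c0 * \<mu>^2"
proof -
  have e: "\<bar>dx$i - a$i\<bar> \<le> E" using component_le_norm_cart[of "dx - a" i] err by simp
  show ?thesis
  proof (cases "i \<in> Al")
    case True
    then have "i \<notin> Au" using active_disjoint by auto
    define r where "r = resid g H l u x ll lu mp (-Al) (-Au) dx i"
    have "\<bar>lu$i / (u$i - x$i) * (dx$i - a$i)\<bar> \<le> 2 / c0 * E"
      unfolding abs_mult using upper_inactive_ratio[OF \<open>i \<notin> Au\<close>] interior[of i] e c0_pos
      by (intro mult_mono) auto
    moreover have "\<bar>(H *v (dx - a))$i\<bar> \<le> Hb * E"
      using H_mult_component_le[of "dx - a" i] mult_left_mono[OF err Hb_nonneg] by linarith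
    ultimately have rb: "\<bar>r - b$i\<bar> \<le> (2 / c0 + Hb) * E"
      unfolding r_def resid_lower_active[OF True] distrib_right by linarith
    have d: "dll$i = r \<or> dll$i = (r - (x$i - l$i) * (ll$i * (x$i - l$i) - mp + ll$i * dx$i))
                                     / (1 + (x$i - l$i)^2)"
      using step True unfolding multiplier_step_def dll_lsA_def r_def by blast
    have "0 < x$i - l$i" "0 \<le> ll$i" using interior[of i] by auto
    from active_multiplier_error[OF this(1) _ this(2) multipliers_le(1) newton_lower e rb d]
    show ?thesis using lower_active[OF True] by blast
  next
    case False
    then have d: "dll$i = - ll$i + (mp - ll$i * dx$i) / (x$i - l$i) \<or> dll$i = - ll$i + mp / (x$i - l$i)"
      using step unfolding multiplier_step_def dll_lsI_def dllC_def by blast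
    have "0 < x$i - l$i" "0 \<le> ll$i" using interior[of i] by auto
    from inactive_multiplier_error[OF this(1) _ this(2) _ newton_lower newton_norms(2) e d]
    have "\<bar>dll$i - b$i\<bar> \<le> 2 / c0 * E + 2 * Kp * Kd / c0 * \<mu>^2"
      using lower_inactive[OF False] by blast
    moreover have "0 \<le> (Hb + Lb) * E"
      using Hb_nonneg multipliers_le(1)[of i] interior(3)[of i] e by simp
    ultimately show ?thesis by (simp add: algebra_simps)
  qed
qed

lemma upper_multiplier_error:
  assumes step: "multiplier_step g H l u x ll lu mp Al Au dx dll dlu" and err: "norm (dx - a) \<le> E"
  shows "\<bar>dlu$i - c$i\<bar> \<le> (2 / c0 + Hb + Lb) * E + 2 * Kp * Kd / c0 * \<mu>^2"
proof -
  have e: "\<bar>- dx$i - - a$i\<bar> \<le> E" using component_le_norm_cart[of "dx - a" i] err by simp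
  show ?thesis
  proof (cases "i \<in> Au")
    case True
    then have "i \<notin> Al" using active_disjoint by auto
    define r where "r = - resid g H l u x ll lu mp (-Al) (-Au) dx i"
    have "\<bar>ll$i / (x$i - l$i) * (a$i - dx$i)\<bar> \<le> 2 / c0 * E"
      unfolding abs_mult using lower_inactive_ratio[OF \<open>i \<notin> Al\<close>] interior[of i] e c0_pos
      by (intro mult_mono) auto
    moreover have "\<bar>(H *v (dx - a))$i\<bar> \<le> Hb * E"
      using H_mult_component_le[of "dx - a" i] mult_left_mono[OF err Hb_nonneg] by linarith
    ultimately have rb: "\<bar>r - c$i\<bar> \<le> (2 / c0 + Hb) * E"
      unfolding r_def resid_upper_active[OF True] distrib_right by linarith
    have d: "dlu$i = r \<or> dlu$i = (r - (u$i - x$i) * (lu$i * (u$i - x$i) - mp + lu$i * - dx$i))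
                                     / (1 + (u$i - x$i)^2)"
      using step True unfolding multiplier_step_def dlu_lsA_def r_def by (auto simp: algebra_simps)
    have "0 < u$i - x$i" "0 \<le> lu$i" using interior[of i] by auto
    from active_multiplier_error[OF this(1) _ this(2) multipliers_le(2) newton_upper_mirrored e rb d]
    show ?thesis using upper_active[OF True] by blast
  next
    case False
    then have d: "dlu$i = - lu$i + (mp - lu$i * - dx$i) / (u$i - x$i) \<or> dlu$i = - lu$i + mp / (u$i - x$i)"
      using step unfolding multiplier_step_def dlu_lsI_def dluC_def by auto
    have "0 < u$i - x$i" "0 \<le> lu$i" "\<bar>- a$i\<bar> \<le> Kd * \<mu>" using interior[of i] newton_norms(2) by auto
    from inactive_multiplier_error[OF this(1) _ this(2) _ newton_upper_mirrored this(3) e d]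
    have "\<bar>dlu$i - c$i\<bar> \<le> 2 / c0 * E + 2 * Kp * Kd / c0 * \<mu>^2"
      using upper_inactive[OF False] by blast
    moreover have "0 \<le> (Hb + Lb) * E"
      using Hb_nonneg multipliers_le(2)[of i] interior(4)[of i] e by simp
    ultimately show ?thesis by (simp add: algebra_simps)
  qed
qed

theorem direction_error:
  assumes "primal_step g H l u x ll lu mp Al Au dx" and "multiplier_step g H l u x ll lu mp Al Au dx dll dlu"
  shows "norm ((dx, dll, dlu) - (a, b, c))
           \<le> direction_error_bound (real CARD('n)) c0 Kp Kd Hb Lb m * \<mu>^2"
proof -
  define Kx where "Kx = (1 + Hb / m) * real CARD('n) * (8 * Kp * Kd * (Hb + 1) / c0)"
  let ?Em = "(2 / c0 + Hb + Lb) * (Kx * \<mu>^2) + 2 * Kp * Kd / c0 * \<mu>^2"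
  have ex: "norm (dx - a) \<le> Kx * \<mu>^2" using primal_error[OF assms(1)] unfolding Kx_def .
  have "norm (dll - b) \<le> real CARD('n) * ?Em"
    by (rule norm_le_card_mult) (use lower_multiplier_error[OF assms(2) ex] in simp)
  moreover have "norm (dlu - c) \<le> real CARD('n) * ?Em"
    by (rule norm_le_card_mult) (use upper_multiplier_error[OF assms(2) ex] in simp)
  moreover have "norm ((dx, dll, dlu) - (a, b, c)) \<le> norm (dx - a) + norm (dll - b) + norm (dlu - c)"
    using norm_prod3_le[of "dx - a" "dll - b" "dlu - c"] by simp
  moreover have "Kx * \<mu>^2 + real CARD('n) * ?Em + real CARD('n) * ?Em
      = ((1 + 2 * real CARD('n) * (2 / c0 + Hb + Lb)) * Kx + 4 * real CARD('n) * Kp * Kd / c0) * \<mu>^2"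
    using c0_pos by (simp add: field_simps)
  moreover have "direction_error_bound (real CARD('n)) c0 Kp Kd Hb Lb m
      = (1 + 2 * real CARD('n) * (2 / c0 + Hb + Lb)) * Kx + 4 * real CARD('n) * Kp * Kd / c0"
    unfolding direction_error_bound_def Kx_def ..
  ultimately show ?thesis using ex by (simp only:)
qed

end

section \<open>Localization near the solution\<close>

lemma active_set_bounds:
  fixes x xs :: "real^'n"
  assumes Al_def: "Al = {i. xs$i = l$i}" and Au_def: "Au = {i. xs$i = u$i}"
    and compl: "\<forall>i. (xs$i - l$i) * lls$i = 0 \<and> (u$i - xs$i) * lus$i = 0"
    and margin: "\<And>i. c0 \<le> (xs$i - l$i) + lls$i" "\<And>i. c0 \<le> (u$i - xs$i) + lus$i" and "0 < c0"
    and interior: "\<forall>i. l$i < x$i \<and> x$i < u$i" "\<forall>i. 0 < ll$i \<and> 0 < lu$i"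
    and close: "\<And>i. \<bar>x$i - xs$i\<bar> \<le> c0 / 2" "\<And>i. \<bar>ll$i - lls$i\<bar> \<le> c0 / 2"
      "\<And>i. \<bar>lu$i - lus$i\<bar> \<le> c0 / 2"
    and centered: "norm (Fmu grad l u \<mu> x ll lu) \<le> C1 * \<mu>"
  defines "Kp \<equiv> 2 * (1 + C1) / c0"
  shows "i \<in> Al \<Longrightarrow> c0 / 2 \<le> ll$i \<and> x$i - l$i \<le> Kp * \<mu>"
    and "i \<notin> Al \<Longrightarrow> c0 / 2 \<le> x$i - l$i \<and> ll$i \<le> Kp * \<mu>"
    and "i \<in> Au \<Longrightarrow> c0 / 2 \<le> lu$i \<and> u$i - x$i \<le> Kp * \<mu>"
    and "i \<notin> Au \<Longrightarrow> c0 / 2 \<le> u$i - x$i \<and> lu$i \<le> Kp * \<mu>"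
proof -
  have lower: "\<bar>(x$i - l$i) - (xs$i - l$i)\<bar> \<le> c0 / 2" and upper: "\<bar>(u$i - x$i) - (u$i - xs$i)\<bar> \<le> c0 / 2"
    using close(1)[of i] by (simp_all add: abs_minus_commute)
  note split_lower = complementary_pair_split[OF _ margin(1)[of i] \<open>0 < c0\<close> lower close(2)[of i],
      where \<mu> = \<mu> and K = C1, folded Kp_def]
  note split_upper = complementary_pair_split[OF _ margin(2)[of i] \<open>0 < c0\<close> upper close(3)[of i],
      where \<mu> = \<mu> and K = C1, folded Kp_def]
  have "0 < x$i - l$i" "0 < u$i - x$i" "0 < ll$i" "0 < lu$i" using interior by auto
  note facts = this compl Fmu_complementarity_le[OF centered, of i]
  show "i \<in> Al \<Longrightarrow> c0 / 2 \<le> ll$i \<and> x$i - l$i \<le> Kp * \<mu>"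
    using split_lower(1) facts unfolding Al_def by auto
  show "i \<notin> Al \<Longrightarrow> c0 / 2 \<le> x$i - l$i \<and> ll$i \<le> Kp * \<mu>"
    using split_lower(2) facts unfolding Al_def by auto
  show "i \<in> Au \<Longrightarrow> c0 / 2 \<le> lu$i \<and> u$i - x$i \<le> Kp * \<mu>"
    using split_upper(1) facts unfolding Au_def by auto
  show "i \<notin> Au \<Longrightarrow> c0 / 2 \<le> u$i - x$i \<and> lu$i \<le> Kp * \<mu>"
    using split_upper(2) facts unfolding Au_def by auto
qed

lemma barrier_regime_near_solution:
  fixes hess :: "real^'n \<Rightarrow> real^'n^'n" and grad :: "real^'n \<Rightarrow> real^'n" and xs :: "real^'n"
  assumes Al_def: "Al = {i. xs$i = l$i}" and Au_def: "Au = {i. xs$i = u$i}"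
    and l_less_u: "\<forall>i. l$i < u$i"
    and compl: "\<forall>i. (xs$i - l$i) * lls$i = 0 \<and> (u$i - xs$i) * lus$i = 0"
    and strict_compl: "\<forall>i. (xs$i - l$i) + lls$i > 0 \<and> (u$i - xs$i) + lus$i > 0"
    and hess_pd: "\<forall>v. v \<noteq> 0 \<and> (\<forall>i\<in>Al \<union> Au. v$i = 0) \<longrightarrow> v \<bullet> (hess xs *v v) > 0"
    and hess_cont: "isCont hess xs" and "0 < C1"
  obtains \<eta> \<mu>0 c0 Kp Hb Lb m where "0 < \<eta>" and "0 < \<mu>0"
    and "\<And>x ll lu \<mu>. norm ((x, ll, lu) - (xs, lls, lus)) \<le> \<eta> \<Longrightarrow>
           \<forall>i. l$i < x$i \<and> x$i < u$i \<Longrightarrow> \<forall>i. 0 < ll$i \<and> 0 < lu$i \<Longrightarrow> 0 < \<mu> \<Longrightarrow> \<mu> \<le> \<mu>0 \<Longrightarrow>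
           norm (Fmu grad l u \<mu> x ll lu) \<le> C1 * \<mu> \<Longrightarrow>
           barrier_regime (hess x) l u x ll lu Al Au \<mu> c0 Kp Hb Lb m"
proof -
  obtain c0 where "0 < c0" and margin: "\<And>i. c0 \<le> min ((xs$i - l$i) + lls$i) ((u$i - xs$i) + lus$i)"
    using finite_positive_lower_bound[of "\<lambda>i. min ((xs$i - l$i) + lls$i) ((u$i - xs$i) + lus$i)"]
      strict_compl by auto
  have margins: "\<And>i. c0 \<le> (xs$i - l$i) + lls$i" "\<And>i. c0 \<le> (u$i - xs$i) + lus$i"
    using margin min.bounded_iff by blast+
  obtain m0 where "0 < m0" and coercive0: "\<And>v. \<forall>i\<in>Al \<union> Au. v$i = 0 \<Longrightarrow> m0 * (norm v)^2 \<le> v \<bullet> (hess xs *v v)"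
    using coercive_on_coordinate_subspace[of "Al \<union> Au" "hess xs"] hess_pd by blast
  obtain r where "0 < r" and hess_near: "\<And>x. norm (x - xs) < r \<Longrightarrow> norm (hess x - hess xs) \<le> m0 / 2"
    using LIM_D[OF hess_cont[unfolded isCont_def], of "m0 / 2"] \<open>0 < m0\<close>
    by (metis less_eq_real_def norm_zero right_minus_eq zero_less_divide_iff zero_less_numeral)
  define \<eta> where "\<eta> = min (c0 / 2) (r / 2)"
  define Kp where "Kp = 2 * (1 + C1) / c0"
  define Hb where "Hb = norm (hess xs) + m0 / 2"
  define Lb where "Lb = norm lls + norm lus + c0"
  define \<mu>0 where "\<mu>0 = min (1 / Kp) (c0 / (4 * Kp * Hb))"
  have "0 < \<eta>" "0 < Kp" "0 < Hb" using \<open>0 < c0\<close> \<open>0 < r\<close> \<open>0 < C1\<close> \<open>0 < m0\<close>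
    by (auto simp: \<eta>_def Kp_def Hb_def add_nonneg_pos)
  then have "0 < \<mu>0" using \<open>0 < c0\<close> by (simp add: \<mu>0_def)
  show ?thesis
  proof (rule that[OF \<open>0 < \<eta>\<close> \<open>0 < \<mu>0\<close>])
    fix x ll lu \<mu>
    assume dist: "norm ((x, ll, lu) - (xs, lls, lus)) \<le> \<eta>"
      and interior: "\<forall>i. l$i < x$i \<and> x$i < u$i" "\<forall>i. 0 < ll$i \<and> 0 < lu$i"
      and "0 < \<mu>" "\<mu> \<le> \<mu>0" and centered: "norm (Fmu grad l u \<mu> x ll lu) \<le> C1 * \<mu>"
    have "norm (x - xs) \<le> \<eta>" "norm (ll - lls) \<le> \<eta>" "norm (lu - lus) \<le> \<eta>"
      using dist norm_prod3_components[of "x - xs" "ll - lls" "lu - lus"] by auto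
    then have close: "\<bar>x$i - xs$i\<bar> \<le> c0 / 2" "\<bar>ll$i - lls$i\<bar> \<le> c0 / 2" "\<bar>lu$i - lus$i\<bar> \<le> c0 / 2" for i
      using component_le_norm_cart[of "x - xs" i] component_le_norm_cart[of "ll - lls" i]
        component_le_norm_cart[of "lu - lus" i] unfolding \<eta>_def by auto
    have hess_close: "norm (hess x - hess xs) \<le> m0 / 2"
      using hess_near \<open>norm (x - xs) \<le> \<eta>\<close> \<open>0 < r\<close> unfolding \<eta>_def by auto
    note bounds = active_set_bounds[OF Al_def Au_def compl margins \<open>0 < c0\<close> interior close centered,
        folded Kp_def]
    show "barrier_regime (hess x) l u x ll lu Al Au \<mu> c0 Kp Hb Lb (m0 / 2)"
    proof
      show "Al \<inter> Au = {}"
      proof -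
        have False if "i \<in> Al" "i \<in> Au" for i
          using that l_less_u[rule_format, of i] unfolding Al_def Au_def by simp
        then show ?thesis by blast
      qed
      show "Kp * \<mu> \<le> 1" and "4 * Kp * Hb * \<mu> \<le> c0"
        using \<open>\<mu> \<le> \<mu>0\<close> \<open>0 < Kp\<close> \<open>0 < Hb\<close> by (auto simp: \<mu>0_def field_simps)
      show "norm (hess x) \<le> Hb"
        using norm_triangle_ineq[of "hess xs" "hess x - hess xs"] hess_close by (simp add: Hb_def)
      show "m0 / 2 * (norm v)^2 \<le> v \<bullet> (hess x *v v)" if "\<forall>i\<in>Al \<union> Au. v$i = 0" for v
        using coercive_perturbation[OF coercive0 hess_close that] .
      show "ll$i \<le> Lb" "lu$i \<le> Lb" for i
        using close(2,3)[of i] component_le_norm_cart[of lls i] component_le_norm_cart[of lus i]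
          norm_ge_zero[of lls] norm_ge_zero[of lus] unfolding Lb_def by linarith+
      show "l$i < x$i" "x$i < u$i" "0 < ll$i" "0 < lu$i" for i using interior by auto
      show "i \<in> Al \<Longrightarrow> c0 / 2 \<le> ll$i \<and> x$i - l$i \<le> Kp * \<mu>"
        and "i \<notin> Al \<Longrightarrow> c0 / 2 \<le> x$i - l$i \<and> ll$i \<le> Kp * \<mu>"
        and "i \<in> Au \<Longrightarrow> c0 / 2 \<le> lu$i \<and> u$i - x$i \<le> Kp * \<mu>"
        and "i \<notin> Au \<Longrightarrow> c0 / 2 \<le> u$i - x$i \<and> lu$i \<le> Kp * \<mu>" for i
        using bounds by blast+
    qed (use \<open>0 < c0\<close> \<open>0 < Kp\<close> \<open>0 < \<mu>\<close> \<open>0 < m0\<close> in simp_all)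
  qed
qed

lemma newton_direction_error:
  fixes x :: "real^'n"
  assumes regime: "barrier_regime (hess x) l u x ll lu Al Au \<mu> c0 Kp Hb Lb m"
    and "bij (Fprime hess l u x ll lu)" and "\<And>v. norm (inv (Fprime hess l u x ll lu) v) \<le> M * norm v"
    and "norm (Fmu grad l u \<mu> x ll lu) \<le> C1 * \<mu>" and "0 \<le> \<sigma>" "\<sigma> \<le> 1"
    and newton: "Fprime hess l u x ll lu dN = - Fmu grad l u (\<sigma> * \<mu>) x ll lu"
    and steps: "primal_step (grad x) (hess x) l u x ll lu (\<sigma> * \<mu>) Al Au dx"
      "multiplier_step (grad x) (hess x) l u x ll lu (\<sigma> * \<mu>) Al Au dx dll dlu"
  shows "norm ((dx, dll, dlu) - dN)
           \<le> direction_error_bound (real CARD('n)) c0 Kp (\<bar>M\<bar> * (C1 + 2 * real CARD('n))) Hb Lb m * \<mu>^2"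
proof -
  obtain a b c where dN: "dN = (a, b, c)" by (metis prod_cases3)
  have "norm dN \<le> \<bar>M\<bar> * (C1 + 2 * real CARD('n)) * \<mu>"
    using newton_step_norm_le[OF assms(2,3) newton assms(4-6)] barrier_regime.\<mu>_pos[OF regime] by simp
  then interpret newton_regime "hess x" l u x ll lu Al Au \<mu> c0 Kp Hb Lb m "grad x" a b c "\<sigma> * \<mu>"
      "\<bar>M\<bar> * (C1 + 2 * real CARD('n))"
    using newton unfolding dN
    by (intro newton_regime.intro regime newton_regime_axioms.intro newton_system_components)
  show ?thesis using direction_error[OF steps] unfolding dN .
qed

theorem mainTheorem11:
  fixes f :: "real^'n \<Rightarrow> real"
    and grad :: "real^'n \<Rightarrow> real^'n"
    and hess :: "real^'n \<Rightarrow> real^'n^'n"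
    and l u xs lls lus :: "real^'n"
    and Al Au :: "'n set"
    and \<delta> \<mu>hat C4 \<sigma> C1 :: real
    and traj :: "real \<Rightarrow> (real^'n) \<times> (real^'n) \<times> (real^'n)"
  assumes lu: "\<forall>i. l$i < u$i"
    and grad: "\<forall>x. (f has_derivative (\<lambda>h. grad x \<bullet> h)) (at x)"
    and hess: "\<forall>x. (grad has_derivative (\<lambda>h. hess x *v h)) (at x)"
    and hess_loc_lip: "\<forall>x. \<exists>r>0. \<exists>L. \<forall>y\<in>ball x r. \<forall>z\<in>ball x r.
                          norm (hess y - hess z) \<le> L * norm (y - z)"
    and Al_def: "Al = {i. xs$i = l$i}"
    and Au_def: "Au = {i. xs$i = u$i}"
    and KKT: "grad xs - lls + lus = 0"
    and feas: "\<forall>i. l$i \<le> xs$i \<and> xs$i \<le> u$i"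
    and mult_nonneg: "\<forall>i. lls$i \<ge> 0 \<and> lus$i \<ge> 0"
    and compl: "\<forall>i. (xs$i - l$i) * lls$i = 0 \<and> (u$i - xs$i) * lus$i = 0"
    and strict_compl: "\<forall>i. (xs$i - l$i) + lls$i > 0 \<and> (u$i - xs$i) + lus$i > 0"
    and hess_pd: "\<forall>v. v \<noteq> 0 \<and> (\<forall>i\<in>Al \<union> Au. v$i = 0) \<longrightarrow> v \<bullet> (hess xs *v v) > 0"
    and \<delta>_pos: "\<delta> > 0"
    and Fprime_inv: "\<exists>M. \<forall>x ll lu. (x, ll, lu) \<in> ball (xs, lls, lus) \<delta> \<longrightarrow>
                        bij (Fprime hess l u x ll lu) \<and>
                        (\<forall>v. norm (inv (Fprime hess l u x ll lu) v) \<le> M * norm v)"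
    and \<mu>hat_pos: "\<mu>hat > 0"
    and traj_lip: "\<exists>L. \<forall>\<mu>1\<in>{0<..\<mu>hat}. \<forall>\<mu>2\<in>{0<..\<mu>hat}.
                       norm (traj \<mu>1 - traj \<mu>2) \<le> L * \<bar>\<mu>1 - \<mu>2\<bar>"
    and traj_ball: "\<forall>\<mu>\<in>{0<..\<mu>hat}. traj \<mu> \<in> ball (xs, lls, lus) \<delta>"
    and traj_eq: "\<forall>\<mu>\<in>{0<..\<mu>hat}.
                    Fmu grad l u \<mu> (fst (traj \<mu>)) (fst (snd (traj \<mu>))) (snd (snd (traj \<mu>))) = 0"
    and traj_dist: "\<forall>\<mu>\<in>{0<..\<mu>hat}. norm (traj \<mu> - (xs, lls, lus)) \<le> C4 * \<mu>"
    and \<sigma>: "0 < \<sigma>" "\<sigma> < 1"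
    and C1: "C1 > 0"
  shows "\<exists>\<rho>>0. \<exists>\<mu>bar. 0 < \<mu>bar \<and> \<mu>bar \<le> \<mu>hat \<and> (\<exists>C>0.
     \<forall>\<mu>\<in>{0<..\<mu>bar}. \<forall>x ll lu.
       (x, ll, lu) \<in> ball (xs, lls, lus) \<delta>
       \<and> (\<forall>i. l$i < x$i \<and> x$i < u$i) \<and> (\<forall>i. ll$i > 0 \<and> lu$i > 0)
       \<and> norm ((x, ll, lu) - traj \<mu>) < \<rho>
       \<and> norm (Fmu grad l u \<mu> x ll lu) \<le> C1 * \<mu>
       \<longrightarrow>
       (\<comment> \<open>well-definedness: step (i) is defined, and (ii) is uniquely solvable\<close>
        (\<forall>i\<in>Al \<union> Au. dcoef (hess x) l u x ll lu i \<noteq> 0)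
        \<and> (\<forall>dxA. (\<forall>i\<in>Al. dxA$i = dxS (grad x) (hess x) l u x ll lu (\<sigma>*\<mu>) i
                          \<or> dxA$i = dxCl l x ll (\<sigma>*\<mu>) i)
                \<and> (\<forall>i\<in>Au. dxA$i = dxS (grad x) (hess x) l u x ll lu (\<sigma>*\<mu>) i
                          \<or> dxA$i = dxCu u x lu (\<sigma>*\<mu>) i)
               \<longrightarrow> (\<exists>!dx. (\<forall>i\<in>Al \<union> Au. dx$i = dxA$i)
                        \<and> (\<forall>i\<in>-(Al \<union> Au). ls_row (grad x) (hess x) l u x ll lu (\<sigma>*\<mu>) (Al \<union> Au) dx i))))
       \<and> (\<forall>dx dll dlu dN.
            (\<forall>i\<in>Al. dx$i = dxS (grad x) (hess x) l u x ll lu (\<sigma>*\<mu>) i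
                      \<or> dx$i = dxCl l x ll (\<sigma>*\<mu>) i)
          \<and> (\<forall>i\<in>Au. dx$i = dxS (grad x) (hess x) l u x ll lu (\<sigma>*\<mu>) i
                      \<or> dx$i = dxCu u x lu (\<sigma>*\<mu>) i)
          \<and> (\<forall>i\<in>-(Al \<union> Au). ls_row (grad x) (hess x) l u x ll lu (\<sigma>*\<mu>) (Al \<union> Au) dx i)
          \<and> (\<forall>i\<in>-Al. dll$i = dll_lsI l x ll (\<sigma>*\<mu>) dx i \<or> dll$i = dllC l x ll (\<sigma>*\<mu>) i)
          \<and> (\<forall>i\<in>-Au. dlu$i = dlu_lsI u x lu (\<sigma>*\<mu>) dx i \<or> dlu$i = dluC u x lu (\<sigma>*\<mu>) i)
          \<and> (\<forall>i\<in>Al. dll$i = resid (grad x) (hess x) l u x ll lu (\<sigma>*\<mu>) (-Al) (-Au) dx i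
                     \<or> dll$i = dll_lsA l x ll (\<sigma>*\<mu>) dx
                                 (resid (grad x) (hess x) l u x ll lu (\<sigma>*\<mu>) (-Al) (-Au) dx i) i)
          \<and> (\<forall>i\<in>Au. dlu$i = - resid (grad x) (hess x) l u x ll lu (\<sigma>*\<mu>) (-Al) (-Au) dx i
                     \<or> dlu$i = dlu_lsA u x lu (\<sigma>*\<mu>) dx
                                 (resid (grad x) (hess x) l u x ll lu (\<sigma>*\<mu>) (-Al) (-Au) dx i) i)
          \<and> Fprime hess l u x ll lu dN = - Fmu grad l u (\<sigma>*\<mu>) x ll lu
          \<longrightarrow> norm ((dx, dll, dlu) - dN) \<le> C * \<mu>^2))"
proof -
  obtain \<eta> \<mu>0 c0 Kp Hb Lb m where "0 < \<eta>" "0 < \<mu>0" and regime: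
    "\<And>x ll lu \<mu>. norm ((x, ll, lu) - (xs, lls, lus)) \<le> \<eta> \<Longrightarrow>
       \<forall>i. l$i < x$i \<and> x$i < u$i \<Longrightarrow> \<forall>i. 0 < ll$i \<and> 0 < lu$i \<Longrightarrow> 0 < \<mu> \<Longrightarrow> \<mu> \<le> \<mu>0 \<Longrightarrow>
       norm (Fmu grad l u \<mu> x ll lu) \<le> C1 * \<mu> \<Longrightarrow>
       barrier_regime (hess x) l u x ll lu Al Au \<mu> c0 Kp Hb Lb m"
  proof -
    obtain r L where "0 < r" "\<forall>y\<in>ball xs r. \<forall>z\<in>ball xs r. norm (hess y - hess z) \<le> L * norm (y - z)"
      using hess_loc_lip by blast
    then have "isCont hess xs" by (rule isCont_if_locally_lipschitz)
    then show thesis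
      by (rule barrier_regime_near_solution[where hess = hess and grad = grad,
            OF Al_def Au_def lu compl strict_compl hess_pd _ C1]) (rule that)
  qed
  obtain M where M: "\<forall>x ll lu. (x, ll, lu) \<in> ball (xs, lls, lus) \<delta> \<longrightarrow>
      bij (Fprime hess l u x ll lu) \<and> (\<forall>v. norm (inv (Fprime hess l u x ll lu) v) \<le> M * norm v)"
    using Fprime_inv by blast
  define C where
    "C = max (direction_error_bound (real CARD('n)) c0 Kp (\<bar>M\<bar> * (C1 + 2 * real CARD('n))) Hb Lb m) 1"
  define \<mu>bar where "\<mu>bar = min \<mu>hat (min \<mu>0 (\<eta> / (2 * (\<bar>C4\<bar> + 1))))"
  have regime_at: "barrier_regime (hess x) l u x ll lu Al Au \<mu> c0 Kp Hb Lb m"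
    if "\<mu> \<in> {0<..\<mu>bar}" and hyp: "(x, ll, lu) \<in> ball (xs, lls, lus) \<delta>
       \<and> (\<forall>i. l$i < x$i \<and> x$i < u$i) \<and> (\<forall>i. ll$i > 0 \<and> lu$i > 0)
       \<and> norm ((x, ll, lu) - traj \<mu>) < \<eta> / 2 \<and> norm (Fmu grad l u \<mu> x ll lu) \<le> C1 * \<mu>"
    for \<mu> x ll lu
  proof -
    have \<mu>: "0 < \<mu>" "\<mu> \<le> \<mu>hat" "\<mu> \<le> \<mu>0" "\<bar>C4\<bar> * \<mu> \<le> \<eta> / 2"
      using that(1) \<open>0 < \<eta>\<close> by (auto simp: \<mu>bar_def field_simps)
    have "norm (traj \<mu> - (xs, lls, lus)) \<le> C4 * \<mu>" using traj_dist \<mu>(1,2) by simp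
    also have "\<dots> \<le> \<bar>C4\<bar> * \<mu>" using \<mu>(1) by (simp add: mult_right_mono)
    finally have "norm ((x, ll, lu) - (xs, lls, lus)) \<le> \<eta>"
      using norm_triangle_ineq[of "(x, ll, lu) - traj \<mu>" "traj \<mu> - (xs, lls, lus)"] hyp \<mu>(4) by simp
    then show ?thesis using regime hyp \<mu> by blast
  qed
  show ?thesis
    apply (rule exI[of _ "\<eta> / 2"], rule conjI)
    subgoal using \<open>0 < \<eta>\<close> by simp
    apply (rule exI[of _ \<mu>bar], intro conjI)
    subgoal using \<open>0 < \<eta>\<close> \<open>0 < \<mu>0\<close> \<mu>hat_pos by (simp add: \<mu>bar_def add_pos_nonneg)
    subgoal by (simp add: \<mu>bar_def)
    apply (rule exI[of _ C], intro conjI ballI allI impI)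
    subgoal by (simp add: C_def)
    subgoal premises prems for \<mu> x ll lu i
      using barrier_regime.dcoef_active_pos[OF regime_at[OF prems(1,2)] prems(3)] by simp
    subgoal premises prems for \<mu> x ll lu dxA
      using barrier_regime.reduced_step_unique[OF regime_at[OF prems(1,2)]] .
    subgoal premises prems for \<mu> x ll lu dx dll dlu dN
    proof -
      have steps: "primal_step (grad x) (hess x) l u x ll lu (\<sigma> * \<mu>) Al Au dx"
        "multiplier_step (grad x) (hess x) l u x ll lu (\<sigma> * \<mu>) Al Au dx dll dlu"
        and newton: "Fprime hess l u x ll lu dN = - Fmu grad l u (\<sigma> * \<mu>) x ll lu"
        using prems(3) unfolding primal_step_def multiplier_step_def by blast+
      have "bij (Fprime hess l u x ll lu)" "\<And>v. norm (inv (Fprime hess l u x ll lu) v) \<le> M * norm v"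
        using M prems(2) by blast+
      from newton_direction_error[OF regime_at[OF prems(1,2)] this _ _ _ newton steps]
      have "norm ((dx, dll, dlu) - dN)
          \<le> direction_error_bound (real CARD('n)) c0 Kp (\<bar>M\<bar> * (C1 + 2 * real CARD('n))) Hb Lb m * \<mu>^2"
        using prems(2) \<sigma> by simp
      also have "\<dots> \<le> C * \<mu>^2" unfolding C_def by (rule mult_right_mono) simp_all
      finally show ?thesis .
    qed
    done
qed

end
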